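(* The canonical collection $\mathcal{S}$ consists of actively connected vertex sets and satisfies: (i) for every $S\in\mathcal{S}$, the tree $T_S$ connects the vertices in $S$; (ii) $\mathcal{S}$ is agreeable with respect to $y$.
   Context: Steiner Forest: finite undirected graph $G=(V,E)$ with non-negative edge costs $(c_e)_{e\in E}$ and a set $\mathcal{D}$ of demand pairs $\{a,b\}\subseteq V$ (partners); feasible solutions are $F\subseteq E$ with each demand pair in one connected component of $(V,F)$, of cost $c(F)=\sum_{e\in F}c_e$. $\mathrm{OPT}$ is a fixed optimal solution that is inclusionwise minimal (no cost-$0$ edge can be omitted keeping feasibility). For $U\subseteq V$, $\delta(U)$ is the set of edges with exactly one endpoint in $U$; $U$ separates $S$ if $S\cap U\ne\emptyset$ and $S\setminus U\ne\emptyset$. The $\varepsilon$-extended moat-growing algorithm (fixed $\varepsilon\ge0$): time $t$ increases continuously from $0$ at unit rate; it maintains tight edges $F$ (initially empty), duals $y_S(t)\ge0$ (initially $0$), and budgets of components (initially $0$). $\mathcal{C}^t$ is the family of vertex sets of connected components of $(V,F)$. A component is demand-active if it contains a vertex not connected in $(V,F)$ to some partner; budget-active if not demand-active but with positive budget; active if either; $\mathcal{A}^t$ is the set of active components. Each $y_S$, $S\in\mathcal{A}^t$, grows at unit rate; budgets of demand-active components grow at rate $\varepsilon$ and of budget-active ones decrease at rate $1$; an edge $e$ with $\sum_{S:e\in\delta(S)}y_S(t)=c_e$ becomes tight and is added to $F$; merging components add budgets. $y_S=y_S(\infty)$; $\mathcal{U}_{\mathrm{sep}}$ is the set of $U\in\mathrm{supp}(y)$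 separating some demand pair. The deactivation time $\tau_v$ of $v$ is the largest $t$ such that for all $s<t$, $v$ lies in a set of $\mathcal{A}^s$. Vertices $u,v$ are actively connected if for some $t$ they lie in a common set of $\mathcal{C}^t$ and $\tau_u,\tau_v\ge t$; this is an equivalence relation and a set is actively connected if contained in one equivalence class. A demand pair $\{a,b\}$ is satisfied by a vertex set $S$ if $\{a,b\}\subseteq S$, and by a collection if by some member. A collection $\mathcal{S}$ of vertex sets is agreeable (w.r.t. $y$) if (A1) every $S\in\mathcal{S}$ is a subset of the vertex set of some connected component of $\mathrm{OPT}$, with at most one $S\in\mathcal{S}$ per connected component of $\mathrm{OPT}$, and (A2) whenever two demand pairs are both separated by some $U\in\mathrm{supp}(y)$, either both or none of them are satisfied by $\mathcal{S}$. Canonical collection: start with a family $\mathcal{F}$ in which each tree (connected component) of $\mathrm{OPT}$ is its own forest; for each $U\in\mathcal{U}_{\mathrm{sep}}$, merge (take the union of vertex and edge sets of) all forests of $\mathcal{F}$ that connect some demand pair separated by $U$ into a single forest. For each $F\in\mathcal{F}$ let $r_F$ be a vertex of $F$ with maximum deactivation time; for each connected component $T$ of $F$, let $S$ be the set of vertices of $T$ actively connected to $r_F$; if $S\ne\emptyset$, add $S$ to $\mathcal{S}$ and let $T_S$ be the minimal subtree of $T$ connecting $S$. *)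

theory Defs
  imports "HOL-Analysis.Analysis"
begin

text \<open>Vertices: a finite type 'v (V = UNIV). Edges: a finite type 'e (E = UNIV),
  each edge e has the two-element endpoint set ends e (multigraphs allowed).\<close>

definition conn :: "('e \<Rightarrow> 'v set) \<Rightarrow> 'e set \<Rightarrow> 'v \<Rightarrow> 'v \<Rightarrow> bool" where
  "conn ends H u v \<longleftrightarrow> (u, v) \<in> {(a, b). \<exists>e\<in>H. ends e = {a, b}}\<^sup>*"

definition comps :: "('e \<Rightarrow> 'v set) \<Rightarrow> 'e set \<Rightarrow> 'v set set" where
  "comps ends H = {{w. conn ends H v w} | v. True}"

definition delta :: "('e \<Rightarrow> 'v set) \<Rightarrow> 'v set \<Rightarrow> 'e set" where
  "delta ends U = {e. ends e \<inter> U \<noteq> {} \<and> ends e - U \<noteq> {}}"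

definition separates :: "'v set \<Rightarrow> 'v set \<Rightarrow> bool" where
  "separates U S \<longleftrightarrow> S \<inter> U \<noteq> {} \<and> S - U \<noteq> {}"

definition feasible :: "('e \<Rightarrow> 'v set) \<Rightarrow> 'v set set \<Rightarrow> 'e set \<Rightarrow> bool" where
  "feasible ends D F \<longleftrightarrow> (\<forall>d\<in>D. \<exists>C\<in>comps ends F. d \<subseteq> C)"

definition cost :: "('e \<Rightarrow> real) \<Rightarrow> 'e set \<Rightarrow> real" where
  "cost c F = (\<Sum>e\<in>F. c e)"

definition is_min_opt :: "('e \<Rightarrow> 'v set) \<Rightarrow> ('e \<Rightarrow> real) \<Rightarrow> 'v set set \<Rightarrow> 'e set \<Rightarrow> bool" where
  "is_min_opt ends c D OPT \<longleftrightarrow> feasible ends D OPT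
     \<and> (\<forall>F. feasible ends D F \<longrightarrow> cost c OPT \<le> cost c F)
     \<and> (\<forall>F. F \<subset> OPT \<longrightarrow> \<not> feasible ends D F)"

text \<open>A run is described by A t (the family of active components at time t)
  and Ft t (the set of tight edges at time t), for t \<ge> 0.\<close>

definition dem_active :: "'v set set \<Rightarrow> 'v set \<Rightarrow> bool" where
  "dem_active D P \<longleftrightarrow> (\<exists>v\<in>P. \<exists>w. {v, w} \<in> D \<and> w \<notin> P)"

text \<open>y_Q(t): the dual of Q at time t = total time in [0,t) during which Q was active.\<close>
definition yt :: "(real \<Rightarrow> 'v set set) \<Rightarrow> 'v set \<Rightarrow> real \<Rightarrow> real" where
  "yt A Q t = measure lborel ({0..<t} \<inter> {s. Q \<in> A s})"

definition yfin :: "(real \<Rightarrow> 'v set set) \<Rightarrow> 'v set \<Rightarrow> real" where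
  "yfin A Q = measure lborel ({0..} \<inter> {s. Q \<in> A s})"

text \<open>Budget of a component P at time t: budgets of all earlier components contained in P
  (these are exactly the ones merged into P) add up; demand-active ones grew at rate eps
  while active, budget-active ones decreased at rate 1 while active.\<close>
definition budget :: "real \<Rightarrow> 'v set set \<Rightarrow> (real \<Rightarrow> 'v set set) \<Rightarrow> 'v set \<Rightarrow> real \<Rightarrow> real" where
  "budget eps D A P t =
     (\<Sum>Q\<in>{Q. Q \<subseteq> P}. if dem_active D Q then eps * yt A Q t else - yt A Q t)"

definition is_run :: "('e \<Rightarrow> 'v set) \<Rightarrow> ('e \<Rightarrow> real) \<Rightarrow> 'v set set \<Rightarrow> real
     \<Rightarrow> (real \<Rightarrow> 'v set set) \<Rightarrow> (real \<Rightarrow> 'e set) \<Rightarrow> bool" where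
  "is_run ends c D eps A Ft \<longleftrightarrow>
     (\<forall>Q. {s. Q \<in> A s} \<in> sets lborel)
   \<and> (\<forall>t\<ge>0. Ft t = {e. c e \<le> (\<Sum>Q\<in>{Q. e \<in> delta ends Q}. yt A Q t)})
   \<and> (\<forall>t\<ge>0. A t = {P \<in> comps ends (Ft t). dem_active D P \<or> 0 < budget eps D A P t})"

definition tau :: "(real \<Rightarrow> 'v set set) \<Rightarrow> 'v \<Rightarrow> real" where
  "tau A v = Sup {t. 0 \<le> t \<and> (\<forall>s. 0 \<le> s \<and> s < t \<longrightarrow> (\<exists>Q\<in>A s. v \<in> Q))}"

definition actconn :: "('e \<Rightarrow> 'v set) \<Rightarrow> (real \<Rightarrow> 'v set set) \<Rightarrow> (real \<Rightarrow> 'e set) \<Rightarrow> 'v \<Rightarrow> 'v \<Rightarrow> bool" where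
  "actconn ends A Ft u v \<longleftrightarrow>
     (\<exists>t\<ge>0. (\<exists>C\<in>comps ends (Ft t). u \<in> C \<and> v \<in> C) \<and> t \<le> tau A u \<and> t \<le> tau A v)"

definition actconn_set :: "('e \<Rightarrow> 'v set) \<Rightarrow> (real \<Rightarrow> 'v set set) \<Rightarrow> (real \<Rightarrow> 'e set) \<Rightarrow> 'v set \<Rightarrow> bool" where
  "actconn_set ends A Ft S \<longleftrightarrow> (\<exists>w. S \<subseteq> {u. actconn ends A Ft w u})"

definition Usep :: "'v set set \<Rightarrow> (real \<Rightarrow> 'v set set) \<Rightarrow> 'v set set" where
  "Usep D A = {U. yfin A U \<noteq> 0 \<and> (\<exists>d\<in>D. separates U d)}"

type_synonym ('v, 'e) forest = "'v set \<times> 'e set"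

definition init_forests :: "('e \<Rightarrow> 'v set) \<Rightarrow> 'e set \<Rightarrow> ('v, 'e) forest set" where
  "init_forests ends OPT = {(K, {e\<in>OPT. ends e \<subseteq> K}) | K. K \<in> comps ends OPT}"

definition connects :: "('e \<Rightarrow> 'v set) \<Rightarrow> ('v, 'e) forest \<Rightarrow> 'v set \<Rightarrow> bool" where
  "connects ends Fo d \<longleftrightarrow> d \<subseteq> fst Fo \<and> (\<forall>a\<in>d. \<forall>b\<in>d. conn ends (snd Fo) a b)"

definition merge_step :: "('e \<Rightarrow> 'v set) \<Rightarrow> 'v set set \<Rightarrow> 'v set
     \<Rightarrow> ('v, 'e) forest set \<Rightarrow> ('v, 'e) forest set" where
  "merge_step ends D U \<F> =
     (let M = {Fo\<in>\<F>. \<exists>d\<in>D. separates U d \<and> connects ends Fo d}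
      in if M = {} then \<F> else insert (\<Union>(fst ` M), \<Union>(snd ` M)) (\<F> - M))"

text \<open>Process the sets of U_sep in the order given by the list Us.\<close>
definition canon_forests :: "('e \<Rightarrow> 'v set) \<Rightarrow> 'v set set \<Rightarrow> 'e set \<Rightarrow> 'v set list
     \<Rightarrow> ('v, 'e) forest set" where
  "canon_forests ends D OPT Us = fold (merge_step ends D) Us (init_forests ends OPT)"

definition fcomps :: "('e \<Rightarrow> 'v set) \<Rightarrow> ('v, 'e) forest \<Rightarrow> 'v set set" where
  "fcomps ends Fo = {{w\<in>fst Fo. conn ends (snd Fo) v w} | v. v \<in> fst Fo}"

definition Sset :: "('e \<Rightarrow> 'v set) \<Rightarrow> (real \<Rightarrow> 'v set set) \<Rightarrow> (real \<Rightarrow> 'e set) \<Rightarrow> 'v \<Rightarrow> 'v set \<Rightarrow> 'v set" where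
  "Sset ends A Ft r T = {v\<in>T. actconn ends A Ft r v}"

definition canon_coll :: "('e \<Rightarrow> 'v set) \<Rightarrow> (real \<Rightarrow> 'v set set) \<Rightarrow> (real \<Rightarrow> 'e set)
     \<Rightarrow> (('v, 'e) forest \<Rightarrow> 'v) \<Rightarrow> ('v, 'e) forest set \<Rightarrow> 'v set set" where
  "canon_coll ends A Ft r \<F> =
     {S. \<exists>Fo\<in>\<F>. \<exists>T\<in>fcomps ends Fo. S = Sset ends A Ft (r Fo) T \<and> S \<noteq> {}}"

definition is_tree :: "('e \<Rightarrow> 'v set) \<Rightarrow> ('v, 'e) forest \<Rightarrow> bool" where
  "is_tree ends G \<longleftrightarrow> (\<forall>e\<in>snd G. ends e \<subseteq> fst G) \<and> fst G \<noteq> {}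
     \<and> (\<forall>u\<in>fst G. \<forall>v\<in>fst G. conn ends (snd G) u v) \<and> card (snd G) + 1 = card (fst G)"

definition is_subtree_conn :: "('e \<Rightarrow> 'v set) \<Rightarrow> ('v, 'e) forest \<Rightarrow> 'v set \<Rightarrow> ('v, 'e) forest \<Rightarrow> bool" where
  "is_subtree_conn ends T S G \<longleftrightarrow> fst G \<subseteq> fst T \<and> snd G \<subseteq> snd T \<and> is_tree ends G
     \<and> S \<subseteq> fst G"

definition is_min_subtree :: "('e \<Rightarrow> 'v set) \<Rightarrow> ('v, 'e) forest \<Rightarrow> 'v set \<Rightarrow> ('v, 'e) forest \<Rightarrow> bool" where
  "is_min_subtree ends T S G \<longleftrightarrow> is_subtree_conn ends T S G
     \<and> (\<forall>G'. is_subtree_conn ends T S G' \<and> fst G' \<subseteq> fst G \<and> snd G' \<subseteq> snd G \<longrightarrow> G' = G)"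

definition T_S :: "('e \<Rightarrow> 'v set) \<Rightarrow> ('v, 'e) forest \<Rightarrow> 'v set \<Rightarrow> 'v set \<Rightarrow> ('v, 'e) forest" where
  "T_S ends Fo T S = (SOME G. is_min_subtree ends (T, {e\<in>snd Fo. ends e \<subseteq> T}) S G)"

definition agreeable :: "('e \<Rightarrow> 'v set) \<Rightarrow> 'v set set \<Rightarrow> (real \<Rightarrow> 'v set set) \<Rightarrow> 'e set
     \<Rightarrow> 'v set set \<Rightarrow> bool" where
  "agreeable ends D A OPT \<S> \<longleftrightarrow>
     (\<forall>S\<in>\<S>. \<exists>K\<in>comps ends OPT. S \<subseteq> K)
   \<and> (\<forall>K\<in>comps ends OPT. \<forall>S1\<in>\<S>. \<forall>S2\<in>\<S>. S1 \<subseteq> K \<longrightarrow> S2 \<subseteq> K \<longrightarrow> S1 = S2)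
   \<and> (\<forall>d1\<in>D. \<forall>d2\<in>D. (\<exists>U. yfin A U \<noteq> 0 \<and> separates U d1 \<and> separates U d2)
        \<longrightarrow> ((\<exists>S\<in>\<S>. d1 \<subseteq> S) \<longleftrightarrow> (\<exists>S\<in>\<S>. d2 \<subseteq> S)))"

end

theory Submission
  imports Defs
begin

(* Each canonical set S lies, by construction, in the active-connectivity class of the root of
   its forest, and T_S exists because every component of a canonical forest is a connected
   component of OPT and hence has a spanning tree.
   Agreeability rests on three facts about the run: active connectivity is transitive; the
   partners of a demand pair are actively connected, since both stay active until the first time
   they get connected; and two terminals in an active moat U whose partners lie outside U are
   actively connected through U.  If two demand pairs are separated by some U in the support
   of y, the merging step for U puts them into one forest, and a root actively connected to one
   pair is then actively connected to the other.
   Only feasibility of OPT is used: neither the costs, eps, the minimality of OPT nor the choice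
   of the roots r_F matters (any root works, by transitivity). *)

section \<open>Connectivity\<close>

lemma conn_refl [simp]: "conn ends H u u"
  by (simp add: conn_def)

lemma conn_sym:
  assumes "conn ends H u v"
  shows "conn ends H v u"
proof -
  have "sym {(a, b). \<exists>e\<in>H. ends e = {a, b}}"
    by (auto simp: sym_def insert_commute)
  with assms show ?thesis
    unfolding conn_def by (meson sym_rtrancl symD)
qed

lemma conn_trans: "conn ends H u v \<Longrightarrow> conn ends H v w \<Longrightarrow> conn ends H u w"
  unfolding conn_def by (rule rtrancl_trans)

lemma conn_mono: "H \<subseteq> H' \<Longrightarrow> conn ends H u v \<Longrightarrow> conn ends H' u v"
  unfolding conn_def by (erule rtrancl_mono[THEN subsetD, rotated]) blast

lemma conn_edge: "e \<in> H \<Longrightarrow> ends e = {a, b} \<Longrightarrow> conn ends H a b"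
  unfolding conn_def by auto

lemma conn_exit_edge:
  assumes "conn ends H x y" "x \<in> W" "y \<notin> W"
  shows "\<exists>e\<in>H. \<exists>p q. ends e = {p, q} \<and> p \<in> W \<and> q \<notin> W"
proof -
  have "(x, y) \<in> {(a, b). \<exists>e\<in>H. ends e = {a, b}}\<^sup>*"
    using assms(1) by (simp add: conn_def)
  then show ?thesis
    using assms(3)
  proof (induction rule: rtrancl_induct)
    case base
    then show ?case using assms(2) by simp
  next
    case (step z y)
    then show ?case by (cases "z \<in> W") blast+
  qed
qed

definition conn_closed :: "('e \<Rightarrow> 'v set) \<Rightarrow> 'e set \<Rightarrow> 'v set \<Rightarrow> bool" where
  "conn_closed ends H W \<longleftrightarrow> (\<forall>x\<in>W. \<forall>y. conn ends H x y \<longrightarrow> y \<in> W)"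

lemma conn_closed_if_edges_inside:
  assumes "\<forall>e\<in>H. ends e \<subseteq> W"
  shows "conn_closed ends H W"
  unfolding conn_closed_def
proof (intro ballI allI impI)
  fix x y assume "x \<in> W" "conn ends H x y"
  show "y \<in> W"
  proof (rule ccontr)
    assume "y \<notin> W"
    then obtain e p q where "e \<in> H" "ends e = {p, q}" "q \<notin> W"
      using conn_exit_edge[OF \<open>conn ends H x y\<close> \<open>x \<in> W\<close>] by blast
    then show False
      using assms by blast
  qed
qed

lemma conn_restrict:
  assumes closed: "conn_closed ends H W" and "x \<in> W" and "conn ends H x y"
  shows "conn ends {e\<in>H. ends e \<subseteq> W} x y"
proof -
  have "(x, y) \<in> {(a, b). \<exists>e\<in>H. ends e = {a, b}}\<^sup>*"
    using assms(3) by (simp add: conn_def)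
  then show ?thesis
  proof (induction rule: rtrancl_induct)
    case base
    then show ?case by simp
  next
    case (step z y)
    from step.hyps(2) obtain e where e: "e \<in> H" "ends e = {z, y}" by auto
    have "conn ends H x z"
      using step.hyps(1) by (simp add: conn_def)
    have "conn ends H x y"
      using conn_trans[OF \<open>conn ends H x z\<close> conn_edge[of e H ends z y, OF e]] .
    then have "z \<in> W" "y \<in> W"
      using closed \<open>x \<in> W\<close> \<open>conn ends H x z\<close> unfolding conn_closed_def by simp_all
    then have "conn ends {e\<in>H. ends e \<subseteq> W} z y"
      using e by (intro conn_edge[of e _ ends z y]) auto
    then show ?case by (rule conn_trans[OF step.IH])
  qed
qed

lemma conn_restrict_iff:
  assumes "conn_closed ends H W" "x \<in> W"
  shows "conn ends {e\<in>H. ends e \<subseteq> W} x y \<longleftrightarrow> conn ends H x y"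
  using conn_restrict[OF assms] conn_mono[of "{e\<in>H. ends e \<subseteq> W}" H ends x y] by blast

lemma conn_class_in_comps: "{w. conn ends H v w} \<in> comps ends H"
  by (auto simp: comps_def)

lemma comps_eq_conn_class:
  assumes "C \<in> comps ends H" "u \<in> C"
  shows "C = {w. conn ends H u w}"
proof -
  obtain v where C: "C = {w. conn ends H v w}"
    using assms(1) by (auto simp: comps_def)
  then have vu: "conn ends H v u"
    using assms(2) by simp
  have "conn ends H v w \<longleftrightarrow> conn ends H u w" for w
    using conn_trans[OF vu] conn_trans[OF conn_sym[OF vu]] by blast
  then show ?thesis
    unfolding C by blast
qed

lemma comps_conn: "C \<in> comps ends H \<Longrightarrow> u \<in> C \<Longrightarrow> v \<in> C \<Longrightarrow> conn ends H u v"
  by (drule (1) comps_eq_conn_class) simp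

lemma comps_eqI:
  assumes "C1 \<in> comps ends H" "C2 \<in> comps ends H" "x \<in> C1" "x \<in> C2"
  shows "C1 = C2"
  using comps_eq_conn_class[OF assms(1,3)] comps_eq_conn_class[OF assms(2,4)] by simp

lemma comps_nonempty:
  assumes "C \<in> comps ends H"
  obtains v where "v \<in> C"
proof -
  obtain v where "C = {w. conn ends H v w}"
    using assms by (auto simp: comps_def)
  then show thesis
    using that[of v] by simp
qed

lemma comps_conn_closed:
  assumes "C \<in> comps ends H"
  shows "conn_closed ends H C"
  unfolding conn_closed_def
proof (intro ballI allI impI)
  fix x y assume "x \<in> C" "conn ends H x y"
  then show "y \<in> C"
    using comps_eq_conn_class[OF assms \<open>x \<in> C\<close>] by simp
qed

lemma feasible_mono:
  assumes "feasible ends D H" "H \<subseteq> H'"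
  shows "feasible ends D H'"
  unfolding feasible_def
proof
  fix d assume "d \<in> D"
  then obtain C where "C \<in> comps ends H" "d \<subseteq> C"
    using assms(1) unfolding feasible_def by blast
  moreover obtain v where "C = {w. conn ends H v w}"
    using \<open>C \<in> comps ends H\<close> by (auto simp: comps_def)
  moreover have "{w. conn ends H v w} \<subseteq> {w. conn ends H' v w}"
    using conn_mono[OF assms(2)] by auto
  ultimately show "\<exists>C\<in>comps ends H'. d \<subseteq> C"
    using conn_class_in_comps[of ends H' v] by auto
qed

lemma separated_pair:
  assumes "separates U d" "card d = 2"
  obtains a b where "d = {a, b}" "a \<in> U" "b \<notin> U"
  using assms unfolding separates_def card_2_iff by blast

section \<open>Trees\<close>

lemma tree_add_edge:
  fixes ends :: "'e::finite \<Rightarrow> 'v::finite set"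
  assumes tree: "is_tree ends (W, F)" and e: "ends e = {p, q}" "p \<in> W" "q \<notin> W"
  shows "is_tree ends (insert q W, insert e F)"
proof -
  have inside: "\<forall>e\<in>F. ends e \<subseteq> W" and connected: "\<forall>u\<in>W. \<forall>v\<in>W. conn ends F u v"
    and card: "card F + 1 = card W"
    using tree by (auto simp: is_tree_def)
  have "e \<notin> F"
    using inside e by blast
  then have card': "card (insert e F) + 1 = card (insert q W)"
    using card e(3) by simp
  have p_conn: "conn ends (insert e F) p u" if "u \<in> insert q W" for u
  proof (cases "u = q")
    case True
    then show ?thesis using conn_edge[of e _ ends p q] e(1) by simp
  next
    case False
    then have "conn ends F p u"
      using that connected e(2) by simp
    then show ?thesis
      by (rule conn_mono[rotated]) auto
  qed
  have "\<forall>u\<in>insert q W. \<forall>v\<in>insert q W. conn ends (insert e F) u v"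
  proof (intro ballI)
    fix u v assume "u \<in> insert q W" "v \<in> insert q W"
    then show "conn ends (insert e F) u v"
      using conn_trans[OF conn_sym[OF p_conn] p_conn] by blast
  qed
  then show ?thesis
    using inside e card' unfolding is_tree_def by auto
qed

lemma spanning_tree_extend:
  fixes ends :: "'e::finite \<Rightarrow> 'v::finite set"
  assumes inside: "\<forall>e\<in>F. ends e \<subseteq> W" and connected: "\<forall>u\<in>W. \<forall>v\<in>W. conn ends F u v"
  shows "is_tree ends (W0, F0) \<Longrightarrow> W0 \<subseteq> W \<Longrightarrow> F0 \<subseteq> F \<Longrightarrow> \<exists>F'\<subseteq>F. is_tree ends (W, F')"
proof (induction "card (W - W0)" arbitrary: W0 F0 rule: less_induct)
  case less
  show ?case
  proof (cases "W0 = W")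
    case True
    then show ?thesis
      using less.prems(1,3) by blast
  next
    case False
    obtain x where "x \<in> W0"
      using less.prems(1) by (auto simp: is_tree_def)
    obtain y where "y \<in> W" "y \<notin> W0"
      using False less.prems(2) by blast
    have "conn ends F x y"
      using connected less.prems(2) \<open>x \<in> W0\<close> \<open>y \<in> W\<close> by blast
    then obtain e p q where e: "e \<in> F" "ends e = {p, q}" "p \<in> W0" "q \<notin> W0"
      using conn_exit_edge[OF _ \<open>x \<in> W0\<close> \<open>y \<notin> W0\<close>] by blast
    then have "q \<in> W"
      using inside by blast
    then have "card (W - insert q W0) < card (W - W0)"
      using e(4) by (intro psubset_card_mono) auto
    moreover have "is_tree ends (insert q W0, insert e F0)"
      using tree_add_edge[OF less.prems(1) e(2-4)] .
    moreover have "insert q W0 \<subseteq> W" "insert e F0 \<subseteq> F"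
      using \<open>q \<in> W\<close> e(1) less.prems(2,3) by auto
    ultimately show ?thesis
      by (rule less.hyps)
  qed
qed

lemma spanning_tree_exists:
  fixes ends :: "'e::finite \<Rightarrow> 'v::finite set"
  assumes "\<forall>e\<in>F. ends e \<subseteq> W" "\<forall>u\<in>W. \<forall>v\<in>W. conn ends F u v" "W \<noteq> {}"
  shows "\<exists>F'\<subseteq>F. is_tree ends (W, F')"
proof -
  obtain x where "x \<in> W"
    using assms(3) by blast
  moreover have "is_tree ends ({x}, {})"
    by (simp add: is_tree_def)
  ultimately show ?thesis
    using spanning_tree_extend[OF assms(1,2), of "{x}" "{}"] by simp
qed

lemma min_subtree_exists:
  fixes ends :: "'e::finite \<Rightarrow> 'v::finite set"
  assumes "is_subtree_conn ends T S G0"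
  shows "\<exists>G. is_min_subtree ends T S G"
proof -
  obtain G where "G \<in> {G. is_subtree_conn ends T S G}"
    and "\<forall>G'\<in>{G. is_subtree_conn ends T S G}. G' \<le> G \<longrightarrow> G = G'"
    using finite_has_minimal2[of "{G. is_subtree_conn ends T S G}" G0] assms by auto
  then have "is_min_subtree ends T S G"
    unfolding is_min_subtree_def less_eq_prod_def by auto
  then show ?thesis ..
qed

lemma fcomps_connected:
  assumes inside: "\<forall>e\<in>snd Fo. ends e \<subseteq> fst Fo" and T: "T \<in> fcomps ends Fo"
  shows "T \<noteq> {}" "\<forall>u\<in>T. \<forall>w\<in>T. conn ends {e\<in>snd Fo. ends e \<subseteq> T} u w"
proof -
  obtain v where v: "v \<in> fst Fo" "T = {w\<in>fst Fo. conn ends (snd Fo) v w}"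
    using T by (auto simp: fcomps_def)
  then show "T \<noteq> {}"
    by auto
  have "T = {w. conn ends (snd Fo) v w}"
    using v conn_closed_if_edges_inside[OF inside] by (auto simp: conn_closed_def)
  then have "T \<in> comps ends (snd Fo)"
    using conn_class_in_comps by simp
  then show "\<forall>u\<in>T. \<forall>w\<in>T. conn ends {e\<in>snd Fo. ends e \<subseteq> T} u w"
    using conn_restrict[OF comps_conn_closed] comps_conn by metis
qed

lemma T_S_connects:
  fixes ends :: "'e::finite \<Rightarrow> 'v::finite set"
  assumes inside: "\<forall>e\<in>snd Fo. ends e \<subseteq> fst Fo" and T: "T \<in> fcomps ends Fo" and "S \<subseteq> T"
  shows "S \<subseteq> fst (T_S ends Fo T S) \<and> (\<forall>u\<in>S. \<forall>v\<in>S. conn ends (snd (T_S ends Fo T S)) u v)"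
proof -
  let ?E = "{e\<in>snd Fo. ends e \<subseteq> T}"
  obtain F where "F \<subseteq> ?E" "is_tree ends (T, F)"
    using spanning_tree_exists[where ends = ends and F = ?E and W = T] fcomps_connected[OF inside T] by auto
  then have "is_subtree_conn ends (T, ?E) S (T, F)"
    using \<open>S \<subseteq> T\<close> by (simp add: is_subtree_conn_def)
  then obtain G where "is_min_subtree ends (T, ?E) S G"
    using min_subtree_exists by blast
  then have "is_min_subtree ends (T, ?E) S (T_S ends Fo T S)"
    unfolding T_S_def by (rule someI)
  then have "is_tree ends (T_S ends Fo T S)" "S \<subseteq> fst (T_S ends Fo T S)"
    by (simp_all add: is_min_subtree_def is_subtree_conn_def)
  then show ?thesis
    unfolding is_tree_def by blast
qed

section \<open>Merging forests\<close>

definition merge_group :: "('e \<Rightarrow> 'v set) \<Rightarrow> 'v set set \<Rightarrow> 'v set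
     \<Rightarrow> ('v, 'e) forest set \<Rightarrow> ('v, 'e) forest set" where
  "merge_group ends D U FF = {Fo\<in>FF. \<exists>d\<in>D. separates U d \<and> connects ends Fo d}"

text \<open>Forests are ordered componentwise, so the merged forest is the supremum of its parts.\<close>

lemma merge_step_eq:
  "merge_step ends D U FF =
     (if merge_group ends D U FF = {} then FF
      else insert (Sup (merge_group ends D U FF)) (FF - merge_group ends D U FF))"
  unfolding merge_step_def merge_group_def Let_def Sup_prod_def ..

lemma connects_mono:
  assumes "connects ends Fo d" "Fo \<le> Fo'"
  shows "connects ends Fo' d"
  using assms conn_mono[of "snd Fo" "snd Fo'" ends] unfolding connects_def less_eq_prod_def by blast

lemma merge_step_extends:
  assumes "Fo \<in> FF"
  shows "\<exists>Fo'\<in>merge_step ends D U FF. Fo \<le> Fo'"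
proof (cases "Fo \<in> merge_group ends D U FF")
  case True
  then show ?thesis
    unfolding merge_step_eq by (auto intro: Sup_upper)
next
  case False
  then show ?thesis
    using assms unfolding merge_step_eq by auto
qed

lemma fold_merge_step_extends:
  "Fo \<in> FF \<Longrightarrow> \<exists>Fo'\<in>fold (merge_step ends D) Us FF. Fo \<le> Fo'"
proof (induction Us arbitrary: FF Fo)
  case Nil
  then show ?case by auto
next
  case (Cons U Us)
  obtain Fo1 where "Fo1 \<in> merge_step ends D U FF" "Fo \<le> Fo1"
    using merge_step_extends[OF Cons.prems] by blast
  moreover obtain Fo2 where "Fo2 \<in> fold (merge_step ends D) Us (merge_step ends D U FF)" "Fo1 \<le> Fo2"
    using Cons.IH[OF \<open>Fo1 \<in> merge_step ends D U FF\<close>] by blast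
  ultimately show ?case
    by (auto intro: order_trans)
qed

lemma merge_step_joins:
  assumes "\<forall>d\<in>D. \<exists>Fo\<in>FF. connects ends Fo d"
    and "d1 \<in> D" "d2 \<in> D" "separates U d1" "separates U d2"
  shows "\<exists>Fo\<in>merge_step ends D U FF. connects ends Fo d1 \<and> connects ends Fo d2"
proof -
  let ?M = "merge_group ends D U FF"
  obtain F1 F2 where F: "F1 \<in> FF" "connects ends F1 d1" "F2 \<in> FF" "connects ends F2 d2"
    using assms(1-3) by blast
  then have "F1 \<in> ?M" "F2 \<in> ?M"
    using assms(2-5) unfolding merge_group_def by blast+
  then have "Sup ?M \<in> merge_step ends D U FF" "F1 \<le> Sup ?M" "F2 \<le> Sup ?M"
    unfolding merge_step_eq by (auto intro: Sup_upper)
  then show ?thesis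
    using connects_mono F(2,4) by blast
qed

lemma disjoint_family_on_fst_merge:
  fixes FF :: "('a set \<times> 'b set) set"
  assumes disj: "disjoint_family_on fst FF" and M: "M \<subseteq> FF"
  shows "disjoint_family_on fst (insert (Sup M) (FF - M))"
proof -
  have Sup_disj: "fst (Sup M) \<inter> fst F = {}" if F: "F \<in> FF - M" for F
  proof -
    have "fst m \<inter> fst F = {}" if "m \<in> M" for m
      using disjoint_family_onD[OF disj, of m F] that F M by auto
    then show ?thesis
      unfolding fst_Sup by blast
  qed
  show ?thesis
    unfolding disjoint_family_on_def
  proof (intro ballI impI)
    fix F1 F2 assume "F1 \<in> insert (Sup M) (FF - M)" "F2 \<in> insert (Sup M) (FF - M)" "F1 \<noteq> F2"
    then consider "F1 = Sup M" "F2 \<in> FF - M" | "F2 = Sup M" "F1 \<in> FF - M" | "F1 \<in> FF" "F2 \<in> FF"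
      by auto
    then show "fst F1 \<inter> fst F2 = {}"
    proof cases
      case 1
      then show ?thesis using Sup_disj by simp
    next
      case 2
      then show ?thesis using Sup_disj[of F1] by blast
    next
      case 3
      then show ?thesis using disjoint_family_onD[OF disj] \<open>F1 \<noteq> F2\<close> by simp
    qed
  qed
qed

definition opt_forests :: "('e \<Rightarrow> 'v set) \<Rightarrow> 'v set set \<Rightarrow> 'e set \<Rightarrow> ('v, 'e) forest set \<Rightarrow> bool" where
  "opt_forests ends D OPT FF \<longleftrightarrow>
     (\<forall>Fo\<in>FF. conn_closed ends OPT (fst Fo) \<and> snd Fo = {e\<in>OPT. ends e \<subseteq> fst Fo})
   \<and> disjoint_family_on fst FF
   \<and> (\<forall>d\<in>D. \<exists>Fo\<in>FF. connects ends Fo d)"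

lemma opt_forests_init:
  assumes "feasible ends D OPT"
  shows "opt_forests ends D OPT (init_forests ends OPT)"
proof -
  have "\<exists>Fo\<in>init_forests ends OPT. connects ends Fo d" if "d \<in> D" for d
  proof -
    obtain C where C: "C \<in> comps ends OPT" "d \<subseteq> C"
      using assms \<open>d \<in> D\<close> unfolding feasible_def by blast
    have "conn ends {e\<in>OPT. ends e \<subseteq> C} a b" if "a \<in> d" "b \<in> d" for a b
      using conn_restrict[OF comps_conn_closed[OF C(1)] _ comps_conn[OF C(1)]] that C(2) by blast
    then have "connects ends (C, {e\<in>OPT. ends e \<subseteq> C}) d"
      using C(2) unfolding connects_def by simp
    moreover have "(C, {e\<in>OPT. ends e \<subseteq> C}) \<in> init_forests ends OPT"
      using C(1) unfolding init_forests_def by blast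
    ultimately show ?thesis ..
  qed
  moreover have "disjoint_family_on fst (init_forests ends OPT)"
    unfolding disjoint_family_on_def init_forests_def using comps_eqI by fastforce
  moreover have "conn_closed ends OPT (fst Fo) \<and> snd Fo = {e\<in>OPT. ends e \<subseteq> fst Fo}"
    if "Fo \<in> init_forests ends OPT" for Fo
    using that comps_conn_closed unfolding init_forests_def by auto
  ultimately show ?thesis
    unfolding opt_forests_def by blast
qed

lemma opt_forest_Sup:
  assumes edges: "\<forall>e. card (ends e) = 2"
    and M: "\<forall>m\<in>M. conn_closed ends OPT (fst m) \<and> snd m = {e\<in>OPT. ends e \<subseteq> fst m}"
  shows "conn_closed ends OPT (fst (Sup M)) \<and> snd (Sup M) = {e\<in>OPT. ends e \<subseteq> fst (Sup M)}"
proof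
  show "conn_closed ends OPT (fst (Sup M))"
    using M unfolding conn_closed_def fst_Sup by blast
  have "e \<in> \<Union>(snd ` M)" if e: "e \<in> OPT" "ends e \<subseteq> \<Union>(fst ` M)" for e
  proof -
    obtain a b where ab: "ends e = {a, b}"
      using edges card_2_iff by metis
    then obtain m where m: "m \<in> M" "a \<in> fst m"
      using e by auto
    have "conn ends OPT a b"
      using conn_edge e(1) ab .
    then have "b \<in> fst m"
      using M m unfolding conn_closed_def by blast
    then show ?thesis
      using M m e ab by auto
  qed
  then show "snd (Sup M) = {e\<in>OPT. ends e \<subseteq> fst (Sup M)}"
    using M unfolding fst_Sup snd_Sup by auto
qed

lemma opt_forests_merge_step:
  assumes edges: "\<forall>e. card (ends e) = 2" and FF: "opt_forests ends D OPT FF"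
  shows "opt_forests ends D OPT (merge_step ends D U FF)"
proof (cases "merge_group ends D U FF = {}")
  case True
  then show ?thesis
    using FF unfolding merge_step_eq by simp
next
  case False
  let ?M = "merge_group ends D U FF"
  have step: "merge_step ends D U FF = insert (Sup ?M) (FF - ?M)"
    using False unfolding merge_step_eq by simp
  have M: "?M \<subseteq> FF"
    unfolding merge_group_def by blast
  have good: "\<forall>Fo\<in>FF. conn_closed ends OPT (fst Fo) \<and> snd Fo = {e\<in>OPT. ends e \<subseteq> fst Fo}"
    and disj: "disjoint_family_on fst FF"
    using FF by (simp_all add: opt_forests_def)
  have "\<forall>m\<in>?M. conn_closed ends OPT (fst m) \<and> snd m = {e\<in>OPT. ends e \<subseteq> fst m}"
    using good M by blast
  then have "conn_closed ends OPT (fst (Sup ?M)) \<and> snd (Sup ?M) = {e\<in>OPT. ends e \<subseteq> fst (Sup ?M)}"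
    by (rule opt_forest_Sup[OF edges])
  then have good': "\<forall>Fo\<in>insert (Sup ?M) (FF - ?M).
      conn_closed ends OPT (fst Fo) \<and> snd Fo = {e\<in>OPT. ends e \<subseteq> fst Fo}"
    using good by blast
  have "disjoint_family_on fst (insert (Sup ?M) (FF - ?M))"
    by (rule disjoint_family_on_fst_merge[OF disj M])
  moreover have "\<exists>Fo\<in>merge_step ends D U FF. connects ends Fo d" if "d \<in> D" for d
  proof -
    obtain Fo where "Fo \<in> FF" "connects ends Fo d"
      using FF \<open>d \<in> D\<close> unfolding opt_forests_def by blast
    moreover obtain Fo' where "Fo' \<in> merge_step ends D U FF" "Fo \<le> Fo'"
      using merge_step_extends[OF \<open>Fo \<in> FF\<close>] by blast
    ultimately show ?thesis
      using connects_mono by blast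
  qed
  ultimately show ?thesis
    using good' unfolding opt_forests_def step by blast
qed

lemma opt_forests_canon_forests:
  assumes "\<forall>e. card (ends e) = 2" "feasible ends D OPT"
  shows "opt_forests ends D OPT (canon_forests ends D OPT Us)"
proof -
  have "opt_forests ends D OPT (fold (merge_step ends D) Us FF)" if "opt_forests ends D OPT FF" for FF
    using that by (induction Us arbitrary: FF) (simp_all add: opt_forests_merge_step[OF assms(1)])
  then show ?thesis
    unfolding canon_forests_def using opt_forests_init[OF assms(2)] by blast
qed

lemma canon_forests_join:
  assumes "\<forall>e. card (ends e) = 2" "feasible ends D OPT" "U \<in> set Us"
    and "d1 \<in> D" "d2 \<in> D" "separates U d1" "separates U d2"
  shows "\<exists>Fo\<in>canon_forests ends D OPT Us. connects ends Fo d1 \<and> connects ends Fo d2"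
proof -
  obtain xs ys where Us: "Us = xs @ U # ys"
    using split_list[OF assms(3)] by blast
  define FF where "FF = fold (merge_step ends D) xs (init_forests ends OPT)"
  have "opt_forests ends D OPT FF"
    unfolding FF_def using opt_forests_canon_forests[OF assms(1,2), of xs] by (simp add: canon_forests_def)
  then obtain Fo where Fo: "Fo \<in> merge_step ends D U FF" "connects ends Fo d1" "connects ends Fo d2"
    using merge_step_joins[OF _ assms(4-7)] unfolding opt_forests_def by blast
  have "canon_forests ends D OPT Us = fold (merge_step ends D) ys (merge_step ends D U FF)"
    unfolding canon_forests_def FF_def Us by simp
  then obtain Fo' where "Fo' \<in> canon_forests ends D OPT Us" "Fo \<le> Fo'"
    using fold_merge_step_extends[OF Fo(1)] by metis
  then show ?thesis
    using connects_mono[OF Fo(2)] connects_mono[OF Fo(3)] by blast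
qed

lemma opt_forests_fcomps:
  assumes FF: "opt_forests ends D OPT FF" and "Fo \<in> FF" and T: "T \<in> fcomps ends Fo"
  shows "T \<in> comps ends OPT" "T \<subseteq> fst Fo"
proof -
  have closed: "conn_closed ends OPT (fst Fo)" and snd_eq: "snd Fo = {e\<in>OPT. ends e \<subseteq> fst Fo}"
    using FF \<open>Fo \<in> FF\<close> unfolding opt_forests_def by auto
  obtain v where v: "v \<in> fst Fo" "T = {w\<in>fst Fo. conn ends (snd Fo) v w}"
    using T unfolding fcomps_def by blast
  have "T = {w. conn ends OPT v w}"
    using v closed conn_restrict_iff[OF closed v(1)] unfolding snd_eq conn_closed_def by blast
  then show "T \<in> comps ends OPT"
    using conn_class_in_comps by simp
  show "T \<subseteq> fst Fo"
    using v by blast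
qed

lemma opt_forests_eqI:
  assumes "opt_forests ends D OPT FF" "Fo1 \<in> FF" "Fo2 \<in> FF" "x \<in> fst Fo1" "x \<in> fst Fo2"
  shows "Fo1 = Fo2"
proof (rule ccontr)
  assume "Fo1 \<noteq> Fo2"
  then have "fst Fo1 \<inter> fst Fo2 = {}"
    using assms(1-3) disjoint_family_onD[of fst FF Fo1 Fo2] unfolding opt_forests_def by simp
  then show False
    using assms(4,5) by blast
qed

lemma opt_forests_edges_inside:
  "opt_forests ends D OPT FF \<Longrightarrow> Fo \<in> FF \<Longrightarrow> \<forall>e\<in>snd Fo. ends e \<subseteq> fst Fo"
  unfolding opt_forests_def by auto

section \<open>The canonical collection\<close>

lemma Sset_subset: "Sset ends A Ft r T \<subseteq> T"
  by (auto simp: Sset_def)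

lemma canon_coll_actconn_set: "S \<in> canon_coll ends A Ft r FF \<Longrightarrow> actconn_set ends A Ft S"
  by (auto simp: canon_coll_def Sset_def actconn_set_def)

lemma canon_coll_in_comp:
  assumes "opt_forests ends D OPT FF" "S \<in> canon_coll ends A Ft r FF"
  shows "\<exists>K\<in>comps ends OPT. S \<subseteq> K"
proof -
  obtain Fo T where "Fo \<in> FF" "T \<in> fcomps ends Fo" "S = Sset ends A Ft (r Fo) T"
    using assms(2) unfolding canon_coll_def by blast
  then show ?thesis
    using opt_forests_fcomps(1)[OF assms(1)] Sset_subset by metis
qed

lemma canon_coll_unique:
  assumes FF: "opt_forests ends D OPT FF" and K: "K \<in> comps ends OPT"
    and S: "S1 \<in> canon_coll ends A Ft r FF" "S2 \<in> canon_coll ends A Ft r FF" "S1 \<subseteq> K" "S2 \<subseteq> K"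
  shows "S1 = S2"
proof -
  have "\<exists>Fo\<in>FF. S = Sset ends A Ft (r Fo) K \<and> K \<subseteq> fst Fo"
    if S: "S \<in> canon_coll ends A Ft r FF" "S \<subseteq> K" for S
  proof -
    obtain Fo T where Fo: "Fo \<in> FF" "T \<in> fcomps ends Fo" "S = Sset ends A Ft (r Fo) T" "S \<noteq> {}"
      using S(1) unfolding canon_coll_def by blast
    then obtain x where "x \<in> T" "x \<in> K"
      using S(2) Sset_subset[of ends A Ft "r Fo" T] by blast
    then have "T = K"
      using comps_eqI[OF opt_forests_fcomps(1)[OF FF Fo(1,2)] K] by blast
    then show ?thesis
      using Fo opt_forests_fcomps(2)[OF FF Fo(1,2)] by blast
  qed
  then obtain Fo1 Fo2 where "Fo1 \<in> FF" "S1 = Sset ends A Ft (r Fo1) K" "K \<subseteq> fst Fo1"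
    and "Fo2 \<in> FF" "S2 = Sset ends A Ft (r Fo2) K" "K \<subseteq> fst Fo2"
    using S by meson
  moreover obtain v where "v \<in> K"
    by (rule comps_nonempty[OF K])
  ultimately show ?thesis
    using opt_forests_eqI[OF FF] by blast
qed

section \<open>Dual growth\<close>

lemma Ico_fmeasurable: "{a..<b::real} \<in> fmeasurable lborel"
proof -
  have "cbox a b \<inter> {a..<b} \<in> fmeasurable lborel"
    by (rule fmeasurable_Int_fmeasurable[OF fmeasurable_cbox]) simp
  moreover have "cbox a b \<inter> {a..<b} = {a..<b}"
    by auto
  ultimately show ?thesis
    by simp
qed

lemma yt_fmeasurable:
  fixes A :: "real \<Rightarrow> 'v set set"
  shows "{s. Q \<in> A s} \<in> sets lborel \<Longrightarrow> {0..<t} \<inter> {s. Q \<in> A s} \<in> fmeasurable lborel"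
  by (rule fmeasurable_Int_fmeasurable[OF Ico_fmeasurable])

lemma yt_mono:
  assumes "{s. Q \<in> A s} \<in> sets lborel" "t1 \<le> t2"
  shows "yt A Q t1 \<le> yt A Q t2"
  unfolding yt_def
  by (rule measure_mono_fmeasurable[OF _ _ yt_fmeasurable[OF assms(1)]]) (use assms in auto)

lemma yt_lipschitz:
  assumes meas: "{s. Q \<in> A s} \<in> sets lborel" and "t1 \<le> t2"
  shows "yt A Q t2 \<le> yt A Q t1 + (t2 - t1)"
proof -
  let ?X = "{s. Q \<in> A s}"
  have "{0..<t2} \<inter> ?X \<subseteq> ({0..<t1} \<inter> ?X) \<union> {t1..<t2}"
    by auto
  then have "yt A Q t2 \<le> measure lborel (({0..<t1} \<inter> ?X) \<union> {t1..<t2})"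
    unfolding yt_def
    by (rule measure_mono_fmeasurable)
      (use meas yt_fmeasurable[OF meas] Ico_fmeasurable in \<open>auto intro: fmeasurable.Un\<close>)
  also have "\<dots> \<le> yt A Q t1 + measure lborel {t1..<t2}"
    unfolding yt_def by (rule measure_Un_le) (use meas in simp_all)
  also have "measure lborel {t1..<t2} = t2 - t1"
    using \<open>t1 \<le> t2\<close> by simp
  finally show ?thesis .
qed

lemma yt_ge_active_time:
  assumes "{s. Q \<in> A s} \<in> sets lborel" "0 \<le> t0" "t0 \<le> t" "\<And>s. t0 \<le> s \<Longrightarrow> s < t \<Longrightarrow> Q \<in> A s"
  shows "t - t0 \<le> yt A Q t"
proof -
  have "{t0..<t} \<subseteq> {0..<t} \<inter> {s. Q \<in> A s}"
    using assms by auto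
  then have "measure lborel {t0..<t} \<le> yt A Q t"
    unfolding yt_def by (rule measure_mono_fmeasurable[OF _ _ yt_fmeasurable[OF assms(1)]]) simp
  then show ?thesis
    using assms(3) by simp
qed

lemma yt_eq_if_inactive_after:
  assumes "t0 \<le> t" "\<And>s. t0 \<le> s \<Longrightarrow> Q \<notin> A s"
  shows "yt A Q t = yt A Q t0"
proof -
  have "x < t0 \<and> x < t" if "Q \<in> A x" for x
    using assms(1) assms(2)[of x] that by (meson not_less less_le_trans)
  then have "{0..<t} \<inter> {s. Q \<in> A s} = {0..<t0} \<inter> {s. Q \<in> A s}"
    using assms(1) by auto
  then show ?thesis
    unfolding yt_def by simp
qed

lemma yfin_nonzero_active:
  assumes "yfin A U \<noteq> 0"
  obtains s where "0 \<le> s" "U \<in> A s"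
proof -
  have "{0..} \<inter> {s. U \<in> A s} \<noteq> {}"
    using assms unfolding yfin_def by (metis measure_empty)
  then show thesis
    using that by auto
qed

section \<open>Runs of the moat-growing algorithm\<close>

locale moat_run =
  fixes ends :: "'e::finite \<Rightarrow> 'v::finite set"
    and c :: "'e \<Rightarrow> real"
    and D :: "'v set set"
    and eps :: real
    and A :: "real \<Rightarrow> 'v set set"
    and Ft :: "real \<Rightarrow> 'e set"
  assumes run: "is_run ends c D eps A Ft"
    and solvable: "feasible ends D UNIV"
    \<comment> \<open>without it a vertex may stay active forever, and then tau is the junk value of
      Sup on an unbounded set\<close>
begin

definition load :: "'e \<Rightarrow> real \<Rightarrow> real" where
  "load e t = (\<Sum>Q\<in>{Q. e \<in> delta ends Q}. yt A Q t)"

definition active_at :: "'v \<Rightarrow> real \<Rightarrow> bool" where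
  "active_at v s \<longleftrightarrow> (\<exists>Q\<in>A s. v \<in> Q)"

definition comp_at :: "real \<Rightarrow> 'v \<Rightarrow> 'v set" where
  "comp_at t v = {w. conn ends (Ft t) v w}"

lemma active_measurable: "{s. Q \<in> A s} \<in> sets lborel"
  using run unfolding is_run_def by blast

lemma Ft_eq: "0 \<le> t \<Longrightarrow> Ft t = {e. c e \<le> load e t}"
  using run unfolding is_run_def load_def by blast

lemma A_eq: "0 \<le> t \<Longrightarrow> A t = {P \<in> comps ends (Ft t). dem_active D P \<or> 0 < budget eps D A P t}"
  using run unfolding is_run_def by blast

lemma A_in_comps: "0 \<le> s \<Longrightarrow> Q \<in> A s \<Longrightarrow> Q \<in> comps ends (Ft s)"
  using A_eq by blast

lemma load_mono: "t1 \<le> t2 \<Longrightarrow> load e t1 \<le> load e t2"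
  unfolding load_def by (intro sum_mono yt_mono[OF active_measurable])

lemma load_lipschitz:
  assumes "t1 \<le> t2"
  shows "load e t2 \<le> load e t1 + real CARD('v set) * (t2 - t1)"
proof -
  have "load e t2 \<le> (\<Sum>Q\<in>{Q. e \<in> delta ends Q}. yt A Q t1 + (t2 - t1))"
    unfolding load_def by (intro sum_mono yt_lipschitz[OF active_measurable assms])
  also have "\<dots> = load e t1 + real (card {Q. e \<in> delta ends Q}) * (t2 - t1)"
    unfolding load_def by (simp add: sum.distrib)
  also have "\<dots> \<le> load e t1 + real CARD('v set) * (t2 - t1)"
  proof -
    have "card {Q. e \<in> delta ends Q} \<le> CARD('v set)"
      by (rule card_mono) simp_all
    then have "real (card {Q. e \<in> delta ends Q}) \<le> real CARD('v set)"
      by (simp only: of_nat_le_iff)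
    then show ?thesis
      using mult_right_mono[of _ _ "t2 - t1"] assms by force
  qed
  finally show ?thesis .
qed

lemma yt_le_load: "e \<in> delta ends P \<Longrightarrow> yt A P t \<le> load e t"
  unfolding load_def by (rule member_le_sum) (simp_all add: yt_def)

lemma Ft_mono:
  assumes "0 \<le> t1" "t1 \<le> t2"
  shows "Ft t1 \<subseteq> Ft t2"
  using Ft_eq[OF assms(1)] Ft_eq[of t2] load_mono[OF assms(2)] assms by (auto intro: order_trans)

lemma conn_Ft_mono: "0 \<le> t1 \<Longrightarrow> t1 \<le> t2 \<Longrightarrow> conn ends (Ft t1) u v \<Longrightarrow> conn ends (Ft t2) u v"
  by (rule conn_mono[OF Ft_mono])

text \<open>Each dual grows at rate at most 1, so an edge that is not tight stays non-tight for a while.\<close>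

lemma Ft_right_constant:
  assumes "0 \<le> t"
  obtains \<delta> where "0 < \<delta>" "Ft (t + \<delta>) = Ft t"
proof -
  define gap where "gap = Min (insert 1 ((\<lambda>e. c e - load e t) ` (- Ft t)))"
  define L where "L = real CARD('v set)"
  define \<delta> where "\<delta> = gap / (L + 1)"
  have "0 < gap"
    unfolding gap_def using Ft_eq[OF assms] by (subst Min_gr_iff) auto
  moreover have "0 \<le> L"
    by (simp add: L_def)
  ultimately have "0 < \<delta>" "L * \<delta> < gap"
    by (simp_all add: \<delta>_def field_simps)
  have "e \<notin> Ft (t + \<delta>)" if "e \<notin> Ft t" for e
  proof -
    have "gap \<le> c e - load e t"
      unfolding gap_def using that by (intro Min_le) auto
    moreover have "load e (t + \<delta>) \<le> load e t + L * \<delta>"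
      using load_lipschitz[of t "t + \<delta>" e] \<open>0 < \<delta>\<close> by (simp add: L_def)
    ultimately have "\<not> c e \<le> load e (t + \<delta>)"
      using \<open>L * \<delta> < gap\<close> by linarith
    then show ?thesis
      using Ft_eq[of "t + \<delta>"] assms \<open>0 < \<delta>\<close> by simp
  qed
  then have "Ft (t + \<delta>) = Ft t"
    using Ft_mono[OF assms, of "t + \<delta>"] \<open>0 < \<delta>\<close> by auto
  with \<open>0 < \<delta>\<close> show thesis
    by (rule that)
qed

lemma Ft_stabilizes:
  obtains T where "0 \<le> T" "\<And>t. T \<le> t \<Longrightarrow> Ft t = Ft T"
proof -
  let ?E = "\<Union>t\<in>{0..}. Ft t"
  have "\<forall>e\<in>?E. \<exists>t. 0 \<le> t \<and> e \<in> Ft t"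
    by auto
  then obtain te where te: "\<And>e. e \<in> ?E \<Longrightarrow> 0 \<le> te e \<and> e \<in> Ft (te e)"
    by (metis bchoice)
  define T where "T = Max (insert 0 (te ` ?E))"
  have "0 \<le> T" and te_le: "\<And>e. e \<in> ?E \<Longrightarrow> te e \<le> T"
    unfolding T_def by simp_all
  have "Ft t = Ft T" if "T \<le> t" for t
  proof
    show "Ft T \<subseteq> Ft t"
      by (rule Ft_mono[OF \<open>0 \<le> T\<close> that])
    show "Ft t \<subseteq> Ft T"
    proof
      fix e assume "e \<in> Ft t"
      then have "e \<in> ?E"
        using \<open>0 \<le> T\<close> that by auto
      then show "e \<in> Ft T"
        using te te_le Ft_mono by blast
    qed
  qed
  with \<open>0 \<le> T\<close> show thesis
    by (rule that)
qed

lemma active_at_iff: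
  assumes "0 \<le> s"
  shows "active_at v s \<longleftrightarrow> comp_at s v \<in> A s"
proof
  assume "active_at v s"
  then obtain Q where Q: "Q \<in> A s" "v \<in> Q"
    unfolding active_at_def by blast
  have "Q = comp_at s v"
    unfolding comp_at_def by (rule comps_eq_conn_class[OF A_in_comps[OF assms Q(1)] Q(2)])
  then show "comp_at s v \<in> A s"
    using Q by simp
next
  assume "comp_at s v \<in> A s"
  moreover have "v \<in> comp_at s v"
    by (simp add: comp_at_def)
  ultimately show "active_at v s"
    unfolding active_at_def by blast
qed

lemma comp_at_in_comps: "comp_at t v \<in> comps ends (Ft t)"
  unfolding comp_at_def by (rule conn_class_in_comps)

lemma active_if_unconnected:
  assumes "0 \<le> s" "{a, b} \<in> D" "\<not> conn ends (Ft s) a b"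
  shows "active_at a s"
proof -
  have "a \<in> comp_at s a" "b \<notin> comp_at s a"
    unfolding comp_at_def using assms(3) by simp_all
  then have "dem_active D (comp_at s a)"
    unfolding dem_active_def using assms(2) by blast
  then have "comp_at s a \<in> A s"
    using A_eq[OF assms(1)] comp_at_in_comps by blast
  then show ?thesis
    using active_at_iff[OF assms(1)] by blast
qed

lemma crossing_edge_becomes_tight:
  assumes "0 \<le> T0" "\<And>s. T0 \<le> s \<Longrightarrow> P \<in> A s" "e \<in> delta ends P"
  obtains t where "T0 \<le> t" "e \<in> Ft t"
proof -
  define t where "t = T0 + \<bar>c e\<bar> + 1"
  have "T0 \<le> t"
    by (simp add: t_def)
  have "t - T0 \<le> yt A P t"
    using yt_ge_active_time[OF active_measurable assms(1) \<open>T0 \<le> t\<close>] assms(2) by blast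
  also have "\<dots> \<le> load e t"
    by (rule yt_le_load[OF assms(3)])
  finally have "c e \<le> load e t"
    unfolding t_def by simp
  then have "e \<in> Ft t"
    using Ft_eq assms(1) \<open>T0 \<le> t\<close> by simp
  with \<open>T0 \<le> t\<close> show thesis
    by (rule that)
qed

lemma stable_comp_at_active:
  assumes "0 \<le> T0" "\<And>t. T0 \<le> t \<Longrightarrow> Ft t = Ft T0" "T0 \<le> s" "active_at v s"
  shows "comp_at T0 v \<in> A s"
proof -
  have "comp_at s v \<in> A s"
    using active_at_iff[of s v] assms(1,3,4) by simp
  then show ?thesis
    unfolding comp_at_def using assms(2)[OF assms(3)] by simp
qed

lemma demand_eventually_connected:
  assumes d: "{a, b} \<in> D"
  shows "\<exists>t\<ge>0. conn ends (Ft t) a b"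
proof (rule ccontr)
  assume "\<not> ?thesis"
  then have never: "\<not> conn ends (Ft t) a b" if "0 \<le> t" for t
    using that by blast
  obtain T0 where T0: "0 \<le> T0" "\<And>t. T0 \<le> t \<Longrightarrow> Ft t = Ft T0"
    using Ft_stabilizes by metis
  let ?P = "comp_at T0 a"
  obtain C where "C \<in> comps ends UNIV" "{a, b} \<subseteq> C"
    using solvable d unfolding feasible_def by blast
  then have "conn ends UNIV a b"
    using comps_conn[of C ends UNIV a b] by simp
  moreover have "a \<in> ?P" "b \<notin> ?P"
    unfolding comp_at_def using never[OF T0(1)] by simp_all
  ultimately obtain e p q where e: "ends e = {p, q}" "p \<in> ?P" "q \<notin> ?P"
    using conn_exit_edge[of ends UNIV a b ?P] by blast
  have "?P \<in> A s" if "T0 \<le> s" for s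
    using stable_comp_at_active[OF T0 that] active_if_unconnected[OF _ d never] T0(1) that by simp
  moreover have "e \<in> delta ends ?P"
    unfolding delta_def using e by auto
  ultimately obtain t where "T0 \<le> t" "e \<in> Ft t"
    by (rule crossing_edge_becomes_tight[OF T0(1)])
  then have "conn ends (Ft T0) p q"
    using T0(2)[OF \<open>T0 \<le> t\<close>] conn_edge[of e _ ends p q] e(1) by simp
  then have "q \<in> ?P"
    using comps_conn_closed[OF comp_at_in_comps] e(2) unfolding conn_closed_def by blast
  with e(3) show False ..
qed

lemma demand_first_connection:
  assumes d: "{a, b} \<in> D"
  obtains t where "0 \<le> t" "conn ends (Ft t) a b"
    "\<And>s. 0 \<le> s \<Longrightarrow> s < t \<Longrightarrow> \<not> conn ends (Ft s) a b"
proof -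
  define C where "C = {t. 0 \<le> t \<and> conn ends (Ft t) a b}"
  have "C \<noteq> {}"
    using demand_eventually_connected[OF d] unfolding C_def by blast
  have bdd: "bdd_below C"
    unfolding C_def by (rule bdd_belowI[of _ 0]) simp
  define t where "t = Inf C"
  have "0 \<le> t"
    unfolding t_def C_def by (rule cInf_greatest) (use \<open>C \<noteq> {}\<close> C_def in auto)
  obtain \<delta> where "0 < \<delta>" "Ft (t + \<delta>) = Ft t"
    by (rule Ft_right_constant[OF \<open>0 \<le> t\<close>])
  obtain t' where "t' \<in> C" "t' < t + \<delta>"
    using cInf_lessD[OF \<open>C \<noteq> {}\<close>, of "t + \<delta>"] \<open>0 < \<delta>\<close> unfolding t_def by auto
  then have "conn ends (Ft (t + \<delta>)) a b"
    unfolding C_def using conn_Ft_mono[of t' "t + \<delta>"] by auto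
  then have "conn ends (Ft t) a b"
    using \<open>Ft (t + \<delta>) = Ft t\<close> by simp
  moreover have "\<not> conn ends (Ft s) a b" if "0 \<le> s" "s < t" for s
  proof
    assume "conn ends (Ft s) a b"
    then have "t \<le> s"
      unfolding t_def using cInf_lower[OF _ bdd] that(1) C_def by blast
    with \<open>s < t\<close> show False
      by simp
  qed
  ultimately show thesis
    using \<open>0 \<le> t\<close> that by blast
qed

lemma budget_after_stable:
  assumes "0 \<le> T0" "\<And>t. T0 \<le> t \<Longrightarrow> Ft t = Ft T0"
    and P: "P \<in> comps ends (Ft T0)" "\<not> dem_active D P"
  obtains K where "\<And>t. T0 \<le> t \<Longrightarrow> budget eps D A P t = K - yt A P t"
proof -
  let ?f = "\<lambda>Q t. if dem_active D Q then eps * yt A Q t else - yt A Q t"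
  have inactive: "Q \<notin> A s" if "Q \<in> {Q. Q \<subseteq> P} - {P}" "T0 \<le> s" for Q s
  proof
    assume "Q \<in> A s"
    then have "Q \<in> comps ends (Ft s)"
      using A_in_comps assms(1) that(2) by simp
    then have Q: "Q \<in> comps ends (Ft T0)"
      using assms(2)[OF that(2)] by simp
    then obtain u where "u \<in> Q"
      by (rule comps_nonempty)
    then have "Q = P"
      using comps_eqI[OF Q P(1)] that(1) by blast
    with that(1) show False
      by simp
  qed
  have "budget eps D A P t = (\<Sum>Q\<in>{Q. Q \<subseteq> P} - {P}. ?f Q T0) - yt A P t" if "T0 \<le> t" for t
  proof -
    have "budget eps D A P t = ?f P t + (\<Sum>Q\<in>{Q. Q \<subseteq> P} - {P}. ?f Q t)"
      unfolding budget_def by (rule sum.remove) auto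
    also have "(\<Sum>Q\<in>{Q. Q \<subseteq> P} - {P}. ?f Q t) = (\<Sum>Q\<in>{Q. Q \<subseteq> P} - {P}. ?f Q T0)"
      using yt_eq_if_inactive_after[OF that] inactive by (intro sum.cong) auto
    finally show ?thesis
      using P(2) by simp
  qed
  then show thesis
    by (rule that)
qed

lemma stable_comp_not_dem_active:
  assumes "0 \<le> T0" "\<And>t. T0 \<le> t \<Longrightarrow> Ft t = Ft T0"
  shows "\<not> dem_active D (comp_at T0 v)"
proof
  assume "dem_active D (comp_at T0 v)"
  then obtain x w where xw: "x \<in> comp_at T0 v" "{x, w} \<in> D" "w \<notin> comp_at T0 v"
    unfolding dem_active_def by blast
  obtain t where "0 \<le> t" "conn ends (Ft t) x w"
    using demand_eventually_connected[OF xw(2)] by blast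
  then have "conn ends (Ft (max t T0)) x w"
    using conn_Ft_mono[of t "max t T0"] by simp
  then have "conn ends (Ft T0) x w"
    using assms(2)[of "max t T0"] by simp
  then have "w \<in> comp_at T0 v"
    using comps_conn_closed[OF comp_at_in_comps] xw(1) unfolding conn_closed_def by blast
  with xw(3) show False ..
qed

text \<open>Once the tight edges have stabilized, the moat of v is not demand-active, so it can only
  stay active on a budget that decreases at rate 1.\<close>

lemma eventually_inactive: "\<exists>s\<ge>0. \<not> active_at v s"
proof (rule ccontr)
  assume "\<not> ?thesis"
  then have always: "active_at v s" if "0 \<le> s" for s
    using that by blast
  obtain T0 where T0: "0 \<le> T0" "\<And>t. T0 \<le> t \<Longrightarrow> Ft t = Ft T0"
    using Ft_stabilizes by metis
  let ?P = "comp_at T0 v"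
  have P_active: "?P \<in> A s" if "T0 \<le> s" for s
    using stable_comp_at_active[OF T0 that always] T0(1) that by simp
  have not_dem: "\<not> dem_active D ?P"
    by (rule stable_comp_not_dem_active[OF T0])
  obtain K where K: "\<And>t. T0 \<le> t \<Longrightarrow> budget eps D A ?P t = K - yt A ?P t"
    using budget_after_stable[OF T0 comp_at_in_comps not_dem] by blast
  define t where "t = T0 + \<bar>K\<bar> + 1"
  have "T0 \<le> t"
    by (simp add: t_def)
  have "t - T0 \<le> yt A ?P t"
    using yt_ge_active_time[OF active_measurable T0(1) \<open>T0 \<le> t\<close>] P_active by blast
  then have "budget eps D A ?P t < 0"
    using K[OF \<open>T0 \<le> t\<close>] unfolding t_def by simp
  moreover have "?P \<in> A t"
    by (rule P_active[OF \<open>T0 \<le> t\<close>])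
  ultimately show False
    using A_eq[of t] T0(1) \<open>T0 \<le> t\<close> not_dem by auto
qed

section \<open>Active connectivity\<close>

lemma tau_eq: "tau A v = Sup {t. 0 \<le> t \<and> (\<forall>s. 0 \<le> s \<and> s < t \<longrightarrow> active_at v s)}"
  unfolding tau_def active_at_def ..

lemma le_tau:
  assumes "0 \<le> t" "\<And>s. 0 \<le> s \<Longrightarrow> s < t \<Longrightarrow> active_at v s"
  shows "t \<le> tau A v"
proof -
  let ?X = "{t. 0 \<le> t \<and> (\<forall>s. 0 \<le> s \<and> s < t \<longrightarrow> active_at v s)}"
  obtain s0 where s0: "0 \<le> s0" "\<not> active_at v s0"
    using eventually_inactive by blast
  have "t' \<le> s0" if "t' \<in> ?X" for t'
  proof (rule ccontr)
    assume "\<not> t' \<le> s0"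
    then show False
      using that s0 by auto
  qed
  then have "bdd_above ?X"
    by (rule bdd_aboveI)
  then show ?thesis
    unfolding tau_eq using assms by (intro cSup_upper) auto
qed

lemma active_before_tau:
  assumes "0 \<le> s" "s < tau A v"
  shows "active_at v s"
proof -
  let ?X = "{t. 0 \<le> t \<and> (\<forall>s. 0 \<le> s \<and> s < t \<longrightarrow> active_at v s)}"
  have "?X \<noteq> {}"
    by auto
  then obtain t where "t \<in> ?X" "s < t"
    using less_cSupD[OF _ assms(2)[unfolded tau_eq]] by blast
  then show ?thesis
    using assms(1) by blast
qed

text \<open>A vertex connected at time t1 to v stays in the active moat of v for as long as v is active.\<close>

lemma tau_propagates:
  assumes "0 \<le> t1" "conn ends (Ft t1) v x" "t1 \<le> tau A x" "t1 \<le> t2" "t2 \<le> tau A v"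
  shows "t2 \<le> tau A x"
proof (rule le_tau)
  show "0 \<le> t2"
    using assms(1,4) by simp
next
  fix s assume s: "0 \<le> s" "s < t2"
  show "active_at x s"
  proof (cases "s < t1")
    case True
    then show ?thesis
      using active_before_tau[of s x] s(1) assms(3) by simp
  next
    case False
    have "comp_at s v \<in> A s"
      using active_before_tau[of s v] active_at_iff[OF s(1)] s assms(5) by simp
    moreover have "x \<in> comp_at s v"
      using conn_Ft_mono[OF assms(1) _ assms(2), of s] False unfolding comp_at_def by simp
    ultimately show ?thesis
      unfolding active_at_def by blast
  qed
qed

lemma actconn_iff:
  "actconn ends A Ft u v \<longleftrightarrow> (\<exists>t\<ge>0. conn ends (Ft t) u v \<and> t \<le> tau A u \<and> t \<le> tau A v)"
proof
  assume "actconn ends A Ft u v"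
  then obtain t C where "0 \<le> t" "C \<in> comps ends (Ft t)" "u \<in> C" "v \<in> C"
    "t \<le> tau A u" "t \<le> tau A v"
    unfolding actconn_def by blast
  moreover from this have "conn ends (Ft t) u v"
    using comps_conn[of C ends "Ft t" u v] by simp
  ultimately show "\<exists>t\<ge>0. conn ends (Ft t) u v \<and> t \<le> tau A u \<and> t \<le> tau A v"
    by blast
next
  assume "\<exists>t\<ge>0. conn ends (Ft t) u v \<and> t \<le> tau A u \<and> t \<le> tau A v"
  then obtain t where "0 \<le> t" "conn ends (Ft t) u v" "t \<le> tau A u" "t \<le> tau A v"
    by blast
  moreover have "u \<in> comp_at t u" "v \<in> comp_at t u"
    unfolding comp_at_def using \<open>conn ends (Ft t) u v\<close> by simp_all
  ultimately show "actconn ends A Ft u v"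
    unfolding actconn_def using comp_at_in_comps by blast
qed

lemma actconn_trans:
  assumes "actconn ends A Ft u v" "actconn ends A Ft v w"
  shows "actconn ends A Ft u w"
proof -
  obtain t1 where t1: "0 \<le> t1" "conn ends (Ft t1) u v" "t1 \<le> tau A u" "t1 \<le> tau A v"
    using assms(1) unfolding actconn_iff by blast
  obtain t2 where t2: "0 \<le> t2" "conn ends (Ft t2) v w" "t2 \<le> tau A v" "t2 \<le> tau A w"
    using assms(2) unfolding actconn_iff by blast
  show ?thesis
  proof (cases "t1 \<le> t2")
    case True
    have "conn ends (Ft t2) u w"
      using conn_trans[OF conn_Ft_mono[OF t1(1) True t1(2)] t2(2)] .
    moreover have "t2 \<le> tau A u"
      by (rule tau_propagates[OF t1(1) conn_sym[OF t1(2)] t1(3) True t2(3)])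
    ultimately show ?thesis
      unfolding actconn_iff using t2 by blast
  next
    case False
    then have "t2 \<le> t1"
      by simp
    have "conn ends (Ft t1) u w"
      using conn_trans[OF t1(2) conn_Ft_mono[OF t2(1) \<open>t2 \<le> t1\<close> t2(2)]] .
    moreover have "t1 \<le> tau A w"
      by (rule tau_propagates[OF t2(1) t2(2) t2(4) \<open>t2 \<le> t1\<close> t1(4)])
    ultimately show ?thesis
      unfolding actconn_iff using t1 by blast
  qed
qed

text \<open>Partners stay active until the first time they are connected.\<close>

lemma actconn_demand:
  assumes d: "{a, b} \<in> D"
  shows "actconn ends A Ft a b"
proof -
  obtain t where t: "0 \<le> t" "conn ends (Ft t) a b"
    and before: "\<And>s. 0 \<le> s \<Longrightarrow> s < t \<Longrightarrow> \<not> conn ends (Ft s) a b"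
    using demand_first_connection[OF d] by blast
  have "t \<le> tau A a"
    using active_if_unconnected[OF _ d before] by (intro le_tau[OF t(1)]) simp
  moreover have "t \<le> tau A b"
  proof (rule le_tau[OF t(1)])
    fix s assume "0 \<le> s" "s < t"
    then have "\<not> conn ends (Ft s) b a"
      using before conn_sym[of ends "Ft s" b a] by blast
    then show "active_at b s"
      using active_if_unconnected[OF \<open>0 \<le> s\<close>, of b a] d by (simp add: insert_commute)
  qed
  ultimately show ?thesis
    unfolding actconn_iff using t by blast
qed

lemma tau_ge_if_separated:
  assumes "0 \<le> s" "U \<in> A s" "a \<in> U" "{a, b} \<in> D" "b \<notin> U"
  shows "s \<le> tau A a"
proof (rule le_tau[OF assms(1)])
  fix s' assume "0 \<le> s'" "s' < s"
  have "\<not> conn ends (Ft s') a b"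
  proof
    assume "conn ends (Ft s') a b"
    then have "conn ends (Ft s) a b"
      using conn_Ft_mono \<open>0 \<le> s'\<close> \<open>s' < s\<close> by simp
    then have "b \<in> U"
      using comps_conn_closed[OF A_in_comps[OF assms(1,2)]] assms(3) unfolding conn_closed_def by blast
    with assms(5) show False ..
  qed
  then show "active_at a s'"
    by (rule active_if_unconnected[OF \<open>0 \<le> s'\<close> assms(4)])
qed

lemma actconn_in_moat:
  assumes "0 \<le> s" "U \<in> A s"
    and "a1 \<in> U" "{a1, b1} \<in> D" "b1 \<notin> U" and "a2 \<in> U" "{a2, b2} \<in> D" "b2 \<notin> U"
  shows "actconn ends A Ft a1 a2"
proof -
  have "conn ends (Ft s) a1 a2"
    by (rule comps_conn[OF A_in_comps[OF assms(1,2)] assms(3,6)])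
  moreover have "s \<le> tau A a1" "s \<le> tau A a2"
    using tau_ge_if_separated assms by blast+
  ultimately show ?thesis
    unfolding actconn_iff using assms(1) by blast
qed

section \<open>Agreeability\<close>

text \<open>The root is actively connected to the terminal of d1 inside U, which is actively connected to
  the terminal of d2 inside U through the moat U, and hence to both vertices of d2.\<close>

lemma canon_coll_transfer:
  assumes FF: "opt_forests ends D OPT FF" and Fs: "Fs \<in> FF" "connects ends Fs d1" "connects ends Fs d2"
    and U: "0 \<le> s" "U \<in> A s"
    and d: "d1 \<in> D" "d2 \<in> D" "card d1 = 2" "card d2 = 2" "separates U d1" "separates U d2"
    and S1: "S1 \<in> canon_coll ends A Ft r FF" "d1 \<subseteq> S1"
  shows "\<exists>S\<in>canon_coll ends A Ft r FF. d2 \<subseteq> S"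
proof -
  obtain a1 b1 where d1: "d1 = {a1, b1}" "a1 \<in> U" "b1 \<notin> U"
    using separated_pair[OF d(5,3)] by blast
  obtain a2 b2 where d2: "d2 = {a2, b2}" "a2 \<in> U" "b2 \<notin> U"
    using separated_pair[OF d(6,4)] by blast
  obtain Fo T where Fo: "Fo \<in> FF" "T \<in> fcomps ends Fo" "S1 = Sset ends A Ft (r Fo) T"
    using S1(1) unfolding canon_coll_def by blast
  have "a1 \<in> T" "actconn ends A Ft (r Fo) a1"
    using S1(2) d1(1) Fo(3) unfolding Sset_def by auto
  moreover have "a1 \<in> fst Fs"
    using Fs(2) d1(1) unfolding connects_def by simp
  ultimately have "Fo = Fs"
    using opt_forests_eqI[OF FF Fo(1) Fs(1)] opt_forests_fcomps(2)[OF FF Fo(1,2)] by blast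
  have "actconn ends A Ft a1 a2"
    using actconn_in_moat[OF U d1(2) _ d1(3) d2(2) _ d2(3)] d(1,2) d1(1) d2(1) by simp
  then have r_a2: "actconn ends A Ft (r Fs) a2"
    using actconn_trans \<open>actconn ends A Ft (r Fo) a1\<close> \<open>Fo = Fs\<close> by blast
  moreover have "actconn ends A Ft (r Fs) b2"
    using actconn_trans[OF r_a2 actconn_demand] d(2) d2(1) by simp
  moreover define T2 where "T2 = {w\<in>fst Fs. conn ends (snd Fs) a2 w}"
  moreover have T2: "T2 \<in> fcomps ends Fs" "d2 \<subseteq> T2"
    using Fs(3) d2(1) unfolding T2_def fcomps_def connects_def by auto
  ultimately have S2: "d2 \<subseteq> Sset ends A Ft (r Fs) T2"
    using d2(1) unfolding Sset_def by auto
  then have "Sset ends A Ft (r Fs) T2 \<in> canon_coll ends A Ft r FF"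
    using Fs(1) T2(1) d2(1) unfolding canon_coll_def by blast
  with S2 show ?thesis
    by blast
qed

lemma canon_coll_respects_separation:
  assumes edges: "\<forall>e. card (ends e) = 2" and pairs: "\<forall>d\<in>D. card d = 2"
    and feas: "feasible ends D OPT" and Us: "Usep D A \<subseteq> set Us"
    and d: "d1 \<in> D" "d2 \<in> D" and U: "yfin A U \<noteq> 0" "separates U d1" "separates U d2"
    and sat: "\<exists>S\<in>canon_coll ends A Ft r (canon_forests ends D OPT Us). d1 \<subseteq> S"
  shows "\<exists>S\<in>canon_coll ends A Ft r (canon_forests ends D OPT Us). d2 \<subseteq> S"
proof -
  obtain s where s: "0 \<le> s" "U \<in> A s"
    using yfin_nonzero_active[OF U(1)] by blast
  have "U \<in> set Us"
    using Us U d unfolding Usep_def by blast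
  then obtain Fs where "Fs \<in> canon_forests ends D OPT Us" "connects ends Fs d1" "connects ends Fs d2"
    using canon_forests_join[OF edges feas _ d U(2,3)] by blast
  then show ?thesis
    using canon_coll_transfer[OF opt_forests_canon_forests[OF edges feas] _ _ _ s d] pairs d sat U(2,3)
    by blast
qed

lemma canon_coll_agreeable:
  assumes edges: "\<forall>e. card (ends e) = 2" and pairs: "\<forall>d\<in>D. card d = 2"
    and feas: "feasible ends D OPT" and sep: "Usep D A \<subseteq> set Us"
  shows "agreeable ends D A OPT (canon_coll ends A Ft r (canon_forests ends D OPT Us))"
  unfolding agreeable_def
proof (intro conjI ballI impI)
  let ?FF = "canon_forests ends D OPT Us"
  fix d1 d2 assume d: "d1 \<in> D" "d2 \<in> D"
    and "\<exists>U. yfin A U \<noteq> 0 \<and> separates U d1 \<and> separates U d2"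
  then obtain U where U: "yfin A U \<noteq> 0" "separates U d1" "separates U d2"
    by blast
  show "(\<exists>S\<in>canon_coll ends A Ft r ?FF. d1 \<subseteq> S) \<longleftrightarrow> (\<exists>S\<in>canon_coll ends A Ft r ?FF. d2 \<subseteq> S)"
    using canon_coll_respects_separation[OF edges pairs feas sep d U]
      canon_coll_respects_separation[OF edges pairs feas sep d(2,1) U(1,3,2)] by blast
qed (use canon_coll_in_comp[OF opt_forests_canon_forests[OF edges feas]]
      canon_coll_unique[OF opt_forests_canon_forests[OF edges feas]] in blast)+

end

theorem lemma6p3:
  fixes ends :: "'e::finite \<Rightarrow> 'v::finite set"
    and c :: "'e \<Rightarrow> real"
    and D :: "'v set set"
    and eps :: real
    and A :: "real \<Rightarrow> 'v set set"
    and Ft :: "real \<Rightarrow> 'e set"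
    and OPT :: "'e set"
    and Us :: "'v set list"
    and r :: "('v, 'e) forest \<Rightarrow> 'v"
  assumes edges: "\<forall>e. card (ends e) = 2"
    and costs: "\<forall>e. 0 \<le> c e"
    and pairs: "\<forall>d\<in>D. card d = 2"
    and eps: "0 \<le> eps"
    and run: "is_run ends c D eps A Ft"
    and opt: "is_min_opt ends c D OPT"
    and Us: "distinct Us" "set Us = Usep D A"
    and root: "\<forall>Fo\<in>canon_forests ends D OPT Us.
                 r Fo \<in> fst Fo \<and> (\<forall>v\<in>fst Fo. tau A v \<le> tau A (r Fo))"
  shows "(\<forall>S\<in>canon_coll ends A Ft r (canon_forests ends D OPT Us). actconn_set ends A Ft S)
       \<and> (\<forall>Fo\<in>canon_forests ends D OPT Us. \<forall>T\<in>fcomps ends Fo.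
            Sset ends A Ft (r Fo) T \<noteq> {} \<longrightarrow>
              (let S = Sset ends A Ft (r Fo) T; G = T_S ends Fo T S
               in S \<subseteq> fst G \<and> (\<forall>u\<in>S. \<forall>v\<in>S. conn ends (snd G) u v)))
       \<and> agreeable ends D A OPT (canon_coll ends A Ft r (canon_forests ends D OPT Us))"
proof -
  have feas: "feasible ends D OPT"
    using opt by (simp add: is_min_opt_def)
  interpret moat_run ends c D eps A Ft
    using run feasible_mono[OF feas subset_UNIV] by unfold_locales
  let ?FF = "canon_forests ends D OPT Us"
  have FF: "opt_forests ends D OPT ?FF"
    by (rule opt_forests_canon_forests[OF edges feas])
  have "agreeable ends D A OPT (canon_coll ends A Ft r ?FF)"
    using canon_coll_agreeable[OF edges pairs feas] Us(2) by simp
  moreover have "let S = Sset ends A Ft (r Fo) T; G = T_S ends Fo T S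
      in S \<subseteq> fst G \<and> (\<forall>u\<in>S. \<forall>v\<in>S. conn ends (snd G) u v)"
    if "Fo \<in> ?FF" "T \<in> fcomps ends Fo" for Fo T
    unfolding Let_def
    by (rule T_S_connects[OF opt_forests_edges_inside[OF FF that(1)] that(2) Sset_subset])
  ultimately show ?thesis
    using canon_coll_actconn_set by blast
qed

end
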